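(* Let $(X,d)$ be a Ptolemaic metric space and let $p\in X$. Then the function $$\tilde\tau_p(x,y)=\log\Big(1+\frac{d(x,y)}{\sqrt{d(x,p)d(y,p)}}\Big)$$ is a metric on $X\setminus\{p\}$.
   Context: A metric space $(X,d)$ is Ptolemaic if $d(x,y)d(z,w)\leq d(x,z)d(y,w)+d(x,w)d(y,z)$ for all $x,y,z,w\in X$. *)

theory Defs
  imports "HOL-Analysis.Analysis"
begin

definition ptolemaic :: "'a set \<Rightarrow> ('a \<Rightarrow> 'a \<Rightarrow> real) \<Rightarrow> bool" where
  "ptolemaic M d \<longleftrightarrow>
     (\<forall>x\<in>M. \<forall>y\<in>M. \<forall>z\<in>M. \<forall>w\<in>M. d x y * d z w \<le> d x z * d y w + d x w * d y z)"

end

theory Submission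
  imports Defs
begin

text \<open>Write a, b, c for the distances of x, y, z to p. The triangle inequality for
  ln (1 + q) with q x y = d x y / sqrt (a b) is the multiplicative inequality
  1 + q x z \<le> (1 + q x y) (1 + q y z). Cleared of denominators and with
  u, v, w the square roots of a, b, c, it reads  d x z v^2 \<le> d x y v w + d y z u v + d x y d y z.
  Ptolemy's inequality  d x z b \<le> d x y c + d y z a  gives this as soon as u \<le> v or w \<le> v,
  using w^2 \<le> v w + d y z and u^2 \<le> u v + d x y (which follow from the reverse triangle
  inequality); when u and w both exceed v, the triangle inequality suffices.\<close>

lemma sq_le_mult_add_abs_diff_sq:
  fixes v w y :: real
  assumes "0 \<le> v" "0 \<le> w" and "\<bar>v\<^sup>2 - w\<^sup>2\<bar> \<le> y"
  shows "w\<^sup>2 \<le> v * w + y"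
proof (cases "w \<le> v")
  case True
  then have "w * w \<le> v * w" using assms(2) by (rule mult_right_mono)
  then show ?thesis using assms(3) by (simp add: power2_eq_square)
next
  case False
  then have "w * (w - v) \<le> (w + v) * (w - v)" using assms(1) by (intro mult_right_mono) auto
  also have "\<dots> = w\<^sup>2 - v\<^sup>2" by (simp add: algebra_simps power2_eq_square)
  finally show ?thesis using assms(3) by (simp add: algebra_simps power2_eq_square)
qed

lemma ptolemy_cleared_ineq:
  fixes u v w x y z :: real
  assumes pos: "0 < u" "0 < v" "0 < w" "0 \<le> x" "0 \<le> y"
    and ptolemy: "z * v\<^sup>2 \<le> x * w\<^sup>2 + y * u\<^sup>2"
    and triangle: "z \<le> x + y"
    and dist_uv: "\<bar>u\<^sup>2 - v\<^sup>2\<bar> \<le> x" and dist_vw: "\<bar>v\<^sup>2 - w\<^sup>2\<bar> \<le> y"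
  shows "z * v\<^sup>2 \<le> x * v * w + y * u * v + x * y"
proof -
  have w_sq: "x * w\<^sup>2 \<le> x * v * w + x * y"
    using mult_left_mono[OF sq_le_mult_add_abs_diff_sq[OF _ _ dist_vw] \<open>0 \<le> x\<close>] pos
    by (simp add: algebra_simps)
  have u_sq: "y * u\<^sup>2 \<le> y * u * v + x * y"
    using mult_left_mono[OF sq_le_mult_add_abs_diff_sq[of v u x] \<open>0 \<le> y\<close>] pos dist_uv
    by (simp add: algebra_simps abs_minus_commute)
  consider "u \<le> v" | "w \<le> v" | "v < u" "v < w" by linarith
  then show ?thesis
  proof cases
    case 1
    then have "y * u\<^sup>2 \<le> y * u * v"
      using pos by (simp add: power2_eq_square mult.assoc mult_left_mono)
    then show ?thesis using ptolemy w_sq by linarith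
  next
    case 2
    then have "x * w\<^sup>2 \<le> x * v * w"
      using pos mult_left_mono[OF mult_right_mono[OF \<open>w \<le> v\<close>, of w] \<open>0 \<le> x\<close>]
      by (simp add: power2_eq_square mult.assoc)
    then show ?thesis using ptolemy u_sq by linarith
  next
    case 3
    have "x * v\<^sup>2 \<le> x * v * w" "y * v\<^sup>2 \<le> y * u * v"
      using 3 pos by (simp_all add: power2_eq_square mult.assoc mult_left_mono)
    moreover have "z * v\<^sup>2 \<le> (x + y) * v\<^sup>2" using triangle by (simp add: mult_right_mono)
    ultimately show ?thesis using pos by (simp add: distrib_right mult_nonneg_nonneg add_increasing2)
  qed
qed

lemma ptolemy_normalized_ineq:
  fixes a b c x y z :: real
  assumes pos: "0 < a" "0 < b" "0 < c" "0 \<le> x" "0 \<le> y"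
    and ptolemy: "z * b \<le> x * c + y * a" and triangle: "z \<le> x + y"
    and dist_ab: "\<bar>a - b\<bar> \<le> x" and dist_bc: "\<bar>b - c\<bar> \<le> y"
  shows "1 + z / sqrt (a * c) \<le> (1 + x / sqrt (a * b)) * (1 + y / sqrt (b * c))"
proof -
  define u v w where "u = sqrt a" and "v = sqrt b" and "w = sqrt c"
  have uvw: "0 < u" "0 < v" "0 < w" "a = u\<^sup>2" "b = v\<^sup>2" "c = w\<^sup>2"
    using pos by (auto simp: u_def v_def w_def)
  have "z * v\<^sup>2 \<le> x * v * w + y * u * v + x * y"
    using ptolemy_cleared_ineq[of u v w x y z] pos uvw ptolemy triangle dist_ab dist_bc
    by (simp add: mult.commute)
  then have "z / (u * w) \<le> x / (u * v) + y / (v * w) + x * y / (u * v\<^sup>2 * w)"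
    using uvw by (simp add: field_simps power2_eq_square)
  moreover have "sqrt (a * c) = u * w" "sqrt (a * b) = u * v" "sqrt (b * c) = v * w"
    by (simp_all add: u_def v_def w_def real_sqrt_mult)
  ultimately show ?thesis
    using uvw by (simp add: algebra_simps power2_eq_square)
qed

lemma Metric_space_ln_one_plus:
  fixes q :: "'a \<Rightarrow> 'a \<Rightarrow> real"
  assumes nonneg: "\<And>x y. 0 \<le> q x y" and commute: "\<And>x y. q x y = q y x"
    and zero: "\<And>x y. \<lbrakk>x \<in> S; y \<in> S\<rbrakk> \<Longrightarrow> q x y = 0 \<longleftrightarrow> x = y"
    and mult_triangle:
      "\<And>x y z. \<lbrakk>x \<in> S; y \<in> S; z \<in> S\<rbrakk> \<Longrightarrow> 1 + q x z \<le> (1 + q x y) * (1 + q y z)"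
  shows "Metric_space S (\<lambda>x y. ln (1 + q x y))"
proof
  fix x y z assume xyz: "x \<in> S" "y \<in> S" "z \<in> S"
  have "ln (1 + q x z) \<le> ln ((1 + q x y) * (1 + q y z))"
    using mult_triangle[OF xyz] nonneg[of x z] by simp
  also have "\<dots> = ln (1 + q x y) + ln (1 + q y z)"
    using nonneg[of x y] nonneg[of y z] by (simp add: ln_mult)
  finally show "ln (1 + q x z) \<le> ln (1 + q x y) + ln (1 + q y z)" .
next
  fix x y assume "x \<in> S" "y \<in> S"
  then show "ln (1 + q x y) = 0 \<longleftrightarrow> x = y"
    using zero nonneg[of x y] by simp
qed (use nonneg commute in auto)

theorem theorem2p2:
  fixes M :: "'a set" and d :: "'a \<Rightarrow> 'a \<Rightarrow> real" and p :: 'a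
  assumes "Metric_space M d" and "ptolemaic M d" and "p \<in> M"
  shows "Metric_space (M - {p}) (\<lambda>x y. ln (1 + d x y / sqrt (d x p * d y p)))"
proof -
  interpret Metric_space M d by fact
  have dist_p_pos: "0 < d x p" if "x \<in> M - {p}" for x
    using that \<open>p \<in> M\<close> by (simp add: order_less_le)
  have dist_p_diff: "\<bar>d x p - d y p\<bar> \<le> d x y" if "x \<in> M" "y \<in> M" for x y
    using mdist_reverse_triangle[OF that(1) \<open>p \<in> M\<close> that(2)] by (simp add: commute)
  show ?thesis
  proof (rule Metric_space_ln_one_plus)
    fix x y z assume xyz: "x \<in> M - {p}" "y \<in> M - {p}" "z \<in> M - {p}"
    have "d x z * d y p \<le> d x y * d z p + d y z * d x p"
      using \<open>ptolemaic M d\<close> xyz \<open>p \<in> M\<close> unfolding ptolemaic_def by (metis Diff_iff commute mult.commute)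
    then show "1 + d x z / sqrt (d x p * d z p)
        \<le> (1 + d x y / sqrt (d x p * d y p)) * (1 + d y z / sqrt (d y p * d z p))"
      using xyz by (intro ptolemy_normalized_ineq dist_p_pos dist_p_diff triangle nonneg) auto
  next
    fix x y assume "x \<in> M - {p}" "y \<in> M - {p}"
    then show "d x y / sqrt (d x p * d y p) = 0 \<longleftrightarrow> x = y"
      using dist_p_pos by (simp add: order_less_imp_not_eq2)
  qed (simp_all add: commute mult.commute)
qed

end
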